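(* Let $X$ be a complex Banach space and $T:X\to X$ a recurrent bounded linear operator. Let $\{T\}'=\{A: A \text{ bounded linear on } X,\ AT=TA\}$ be the commutant of $T$, and suppose there is a subset $\mathcal M\subset\{T\}'$ such that the set $\{x\in X:\overline{\{Ax:A\in\mathcal M\}}=X\}$ is residual in $X$. Then $T\oplus T$ is recurrent on $X\oplus X$.
   Context: An operator $S$ on a Banach space $Y$ is recurrent if for every non-empty open $U\subset Y$ there is a positive integer $k$ with $U\cap S^{-k}(U)\neq\emptyset$. $T\oplus T$ acts on $X\oplus X$ by $(x,y)\mapsto(Tx,Ty)$. A set is residual if it contains a countable intersection of dense open sets. *)

theory Defs
  imports "HOL-Analysis.Analysis"
begin

text \<open>Complex Banach spaces (not in the distribution library): a real Banach space
with a complex scalar multiplication making it a complex normed vector space.\<close>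
class scaleC =
  fixes scaleC :: "complex \<Rightarrow> 'a \<Rightarrow> 'a" (infixr \<open>*\<^sub>C\<close> 75)

class complex_banach = banach + scaleC +
  assumes scaleC_add_right: "a *\<^sub>C (x + y) = a *\<^sub>C x + a *\<^sub>C y"
    and scaleC_add_left: "(a + b) *\<^sub>C x = a *\<^sub>C x + b *\<^sub>C x"
    and scaleC_scaleC: "a *\<^sub>C (b *\<^sub>C x) = (a * b) *\<^sub>C x"
    and scaleC_one: "1 *\<^sub>C x = x"
    and scaleR_scaleC: "scaleR r x = complex_of_real r *\<^sub>C x"
    and norm_scaleC: "norm (a *\<^sub>C x) = cmod a * norm x"

definition bounded_clinear :: "('a::complex_banach \<Rightarrow> 'b::complex_banach) \<Rightarrow> bool" where
  "bounded_clinear f \<longleftrightarrow>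
     (\<forall>x y. f (x + y) = f x + f y) \<and> (\<forall>c x. f (c *\<^sub>C x) = c *\<^sub>C f x) \<and>
     (\<exists>K. \<forall>x. norm (f x) \<le> norm x * K)"

definition recurrent :: "('b::topological_space \<Rightarrow> 'b) \<Rightarrow> bool" where
  "recurrent S \<longleftrightarrow>
     (\<forall>U. open U \<and> U \<noteq> {} \<longrightarrow> (\<exists>k::nat. k > 0 \<and> U \<inter> (S ^^ k) -` U \<noteq> {}))"

definition residual :: "'b::topological_space set \<Rightarrow> bool" where
  "residual R \<longleftrightarrow>
     (\<exists>\<F>. countable \<F> \<and> (\<forall>G\<in>\<F>. open G \<and> closure G = UNIV) \<and> \<Inter>\<F> \<subseteq> R)"

definition dsum_op :: "('a \<Rightarrow> 'a) \<Rightarrow> ('a \<times> 'a \<Rightarrow> 'a \<times> 'a)" where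
  "dsum_op T = (\<lambda>(x, y). (T x, T y))"

end

theory Submission
  imports Defs
begin

text \<open>Pick a nonempty open box \<open>U \<times> V\<close> in a given open set. By Baire's theorem some
\<open>x \<in> U\<close> has a dense \<open>\<M>\<close>-orbit, so \<open>A x \<in> V\<close> for some \<open>A \<in> \<M>\<close>. Recurrence of \<open>T\<close>
applied to the open neighbourhood \<open>U \<inter> A\<^sup>-\<^sup>1(V)\<close> of \<open>x\<close> yields \<open>z\<close> and \<open>k > 0\<close> with
\<open>z, T\<^sup>k z\<close> in it; since \<open>A\<close> commutes with \<open>T\<close>, the point \<open>(z, A z)\<close> and its image
\<open>(T\<^sup>k z, A (T\<^sup>k z))\<close> under \<open>(T \<oplus> T)\<^sup>k\<close> both lie in \<open>U \<times> V\<close>.\<close>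

lemma bounded_clinear_imp_bounded_linear:
  assumes "bounded_clinear A"
  shows "bounded_linear A"
proof -
  from assms obtain K where add: "\<And>x y. A (x + y) = A x + A y"
    and scale: "\<And>c x. A (c *\<^sub>C x) = c *\<^sub>C A x"
    and bound: "\<And>x. norm (A x) \<le> norm x * K"
    unfolding bounded_clinear_def by blast
  show ?thesis
  proof (rule bounded_linear_intro[where K = K])
    show "A (r *\<^sub>R x) = r *\<^sub>R A x" for r x
      by (simp add: scaleR_scaleC scale)
  qed (use add bound in auto)
qed

lemma residual_imp_dense:
  fixes R :: "'a::complete_space set"
  assumes "residual R"
  shows "closure R = UNIV"
proof -
  from assms obtain \<F> where \<F>: "countable \<F>" "\<forall>G\<in>\<F>. open G \<and> closure G = UNIV"
    and "\<Inter>\<F> \<subseteq> R"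
    unfolding residual_def by blast
  have "euclidean closure_of \<Inter>\<F> = topspace euclidean"
    by (rule Baire_category) (use \<F> completely_metrizable_space_euclidean in auto)
  then have "closure (\<Inter>\<F>) = UNIV"
    by simp
  with \<open>\<Inter>\<F> \<subseteq> R\<close> show ?thesis
    by (metis closure_mono top.extremum_uniqueI)
qed

lemma dense_Int_open_nonempty:
  assumes "closure S = UNIV" "open U" "U \<noteq> {}"
  shows "U \<inter> S \<noteq> {}"
  using assms open_Int_closure_eq_empty by fastforce

lemma funpow_commute:
  assumes "A \<circ> T = T \<circ> A"
  shows "A ((T ^^ k) x) = (T ^^ k) (A x)"
  by (induction k) (use fun_cong[OF assms] in auto)

lemma dsum_op_funpow: "(dsum_op T ^^ k) (x, y) = ((T ^^ k) x, (T ^^ k) y)"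
  by (induction k) (auto simp: dsum_op_def)

lemma recurrent_dsum_op_if_dense_orbits_dense:
  fixes T :: "'a::topological_space \<Rightarrow> 'a"
  assumes "recurrent T"
    and \<M>: "\<And>A. A \<in> \<M> \<Longrightarrow> continuous_on UNIV A \<and> A \<circ> T = T \<circ> A"
    and dense_orbits: "closure {x. closure {A x | A. A \<in> \<M>} = UNIV} = UNIV"
  shows "recurrent (dsum_op T)"
  unfolding recurrent_def
proof (intro allI impI)
  fix W :: "('a \<times> 'a) set"
  assume W: "open W \<and> W \<noteq> {}"
  then obtain p where "p \<in> W"
    by blast
  then obtain U V where UV: "open U" "open V" "p \<in> U \<times> V" "U \<times> V \<subseteq> W"
    using W open_prod_elim by metis
  then have "U \<noteq> {}" "V \<noteq> {}"
    by auto
  obtain x where x: "x \<in> U" "closure {A x | A. A \<in> \<M>} = UNIV"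
    using dense_Int_open_nonempty[OF dense_orbits \<open>open U\<close> \<open>U \<noteq> {}\<close>] by blast
  obtain A where "A \<in> \<M>" "A x \<in> V"
    using dense_Int_open_nonempty[OF x(2) \<open>open V\<close> \<open>V \<noteq> {}\<close>] by blast
  with \<M> have A: "continuous_on UNIV A" "A \<circ> T = T \<circ> A"
    by auto
  have "open (U \<inter> A -` V)"
    using UV(1,2) A(1) by (simp add: open_Int open_vimage)
  moreover have "x \<in> U \<inter> A -` V"
    using x(1) \<open>A x \<in> V\<close> by simp
  ultimately obtain k z where "k > 0" "z \<in> U \<inter> A -` V" "(T ^^ k) z \<in> U \<inter> A -` V"
    using \<open>recurrent T\<close> unfolding recurrent_def by blast
  then have "(z, A z) \<in> W \<inter> (dsum_op T ^^ k) -` W"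
    using UV(4) by (auto simp: dsum_op_funpow funpow_commute[OF A(2)])
  with \<open>k > 0\<close> show "\<exists>k>0. W \<inter> (dsum_op T ^^ k) -` W \<noteq> {}"
    by blast
qed

theorem theorem9p1:
  fixes T :: "'a::{complex_banach} \<Rightarrow> 'a"
    and \<M> :: "('a \<Rightarrow> 'a) set"
  assumes "bounded_clinear T"
    and "recurrent T"
    and "\<M> \<subseteq> {A. bounded_clinear A \<and> A \<circ> T = T \<circ> A}"
    and "residual {x. closure {A x | A. A \<in> \<M>} = UNIV}"
  shows "recurrent (dsum_op T)"
proof (rule recurrent_dsum_op_if_dense_orbits_dense)
  show "recurrent T"
    by fact
  show "continuous_on UNIV A \<and> A \<circ> T = T \<circ> A" if "A \<in> \<M>" for A
    using that assms(3) bounded_clinear_imp_bounded_linear linear_continuous_on by blast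
  show "closure {x. closure {A x | A. A \<in> \<M>} = UNIV} = UNIV"
    using assms(4) by (rule residual_imp_dense)
qed

end
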